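(* $\mathrm{co}\text{-}\mathrm{CFL}\not\subseteq\mathrm{CFL}/n$. Equivalently, $\mathrm{co}\text{-}\mathrm{CFL}/n\neq\mathrm{CFL}/n$.
   Context: $\mathrm{CFL}$ is the family of context-free languages, and $\mathrm{co}\text{-}\mathrm{CFL}$ is the family of all languages whose complements (with respect to their alphabet) are context-free. An advice function is a map $h:\mathbb{N}\to\Gamma^*$, for some alphabet $\Gamma$, with $|h(n)|=n$ for all $n$. For strings $x=x_1\cdots x_n$ and $w=\sigma_1\cdots\sigma_n$ of the same length, $\begin{bmatrix}x\\ w\end{bmatrix}$ denotes the string $\begin{bmatrix}x_1\\ \sigma_1\end{bmatrix}\cdots\begin{bmatrix}x_n\\ \sigma_n\end{bmatrix}$ over the product alphabet of pairs of symbols. For a family $\mathcal{C}$ of languages, $\mathcal{C}/n$ is the family of all languages $L$ over an alphabet $\Sigma$ for which there exist an advice function $h$ and a language $L'\in\mathcal{C}$ such that for all $x\in\Sigma^*$: $x\in L$ iff $\begin{bmatrix}x\\ h(|x|)\end{bmatrix}\in L'$. *)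

theory Defs
  imports Main
begin

text \<open>Context-free grammars: nonterminals are natural numbers (any finite set of
nonterminals can be renamed into nat), terminals of type 't.\<close>

type_synonym 't cfg_prods = "(nat \<times> (nat + 't) list) set"

definition derives1 :: "'t cfg_prods \<Rightarrow> (nat + 't) list \<Rightarrow> (nat + 't) list \<Rightarrow> bool" where
  "derives1 P u v \<longleftrightarrow>
     (\<exists>\<alpha> \<beta> A r. u = \<alpha> @ [Inl A] @ \<beta> \<and> (A, r) \<in> P \<and> v = \<alpha> @ r @ \<beta>)"

definition derives :: "'t cfg_prods \<Rightarrow> (nat + 't) list \<Rightarrow> (nat + 't) list \<Rightarrow> bool" where
  "derives P = (derives1 P)\<^sup>*\<^sup>*"

definition lang :: "'t cfg_prods \<Rightarrow> nat \<Rightarrow> 't list set" where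
  "lang P S = {w. derives P [Inl S] (map Inr w)}"

definition CFL :: "'t set \<Rightarrow> 't list set \<Rightarrow> bool" where
  "CFL Sig L \<longleftrightarrow> L \<subseteq> lists Sig \<and> (\<exists>P S. finite P \<and> L = lang P S)"

definition coCFL :: "'t set \<Rightarrow> 't list set \<Rightarrow> bool" where
  "coCFL Sig L \<longleftrightarrow> L \<subseteq> lists Sig \<and> CFL Sig (lists Sig - L)"

text \<open>CFL/n: advice alphabet Gamma is a finite set of naturals (any finite alphabet
can be renamed into one); zip x w is the track string [x; w].\<close>
definition CFL_advice :: "'t set \<Rightarrow> 't list set \<Rightarrow> bool" where
  "CFL_advice Sig L \<longleftrightarrow> L \<subseteq> lists Sig \<and>
     (\<exists>(Gamma :: nat set) (h :: nat \<Rightarrow> nat list) (L' :: ('t \<times> nat) list set).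
        finite Gamma \<and> (\<forall>n. length (h n) = n \<and> set (h n) \<subseteq> Gamma) \<and>
        CFL (Sig \<times> Gamma) L' \<and>
        (\<forall>x \<in> lists Sig. x \<in> L \<longleftrightarrow> zip x (h (length x)) \<in> L'))"

end

theory Submission
  imports Defs
begin

text \<open>
Let $N$ be the set of binary words $s$ of some length $2m$ with $s_k \neq s_{k+m}$ for some
$k < m$. It is context-free, being the set of concatenations of two odd-length words with
different middle letters, so its complement $L$ in $\{0,1\}^*$ is co-context-free; and $L$
contains every square $ww$.

Suppose a grammar with nonterminal set $V$ and right-hand sides of length at most $K$ accepted,
together with an advice string $H$ of length $2m$, exactly the words of $L$ of that length.
For each $w$ of length $m$, a derivation tree of $ww$ paired with $H$ has a subtree whose yield is
a window $[i, i + l)$ with $t \le l \le K t$. Two words $w, w'$ sharing the window position, its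
length and the root nonterminal of the subtree can exchange their windows, so the grafted word is
accepted again, hence a square; as $l \le m$, this forces $w$ and $w'$ to agree on the $l$ residues
of the window modulo $m$. So each of the at most $(2m+1)^2 |V|$ classes has at most $2^{m-t}$
members, whence $2^t \le (2m+1)^2 |V|$, which fails for $m = K t$ and $t$ large.
\<close>

definition graft :: "nat \<Rightarrow> nat \<Rightarrow> 'a list \<Rightarrow> 'a list \<Rightarrow> 'a list" where
  "graft i l s s' = take i s @ take l (drop i s') @ drop (i + l) s"

lemma length_graft: "length s' = length s \<Longrightarrow> i + l \<le> length s \<Longrightarrow> length (graft i l s s') = length s"
  by (simp add: graft_def)

lemma nth_graft:
  "length s' = length s \<Longrightarrow> i + l \<le> length s \<Longrightarrow> p < length s \<Longrightarrow>
     graft i l s s' ! p = (if i \<le> p \<and> p < i + l then s' ! p else s ! p)"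
  by (auto simp: graft_def nth_append)

lemma graft_zip:
  "length s' = length s \<Longrightarrow> i + l \<le> length s \<Longrightarrow>
     graft i l (zip s H) (zip s' H) = zip (graft i l s s') H"
  by (simp add: graft_def take_zip drop_zip zip_append1 add.commute)

lemma set_graft: "set (graft i l s s') \<subseteq> set s \<union> set s'"
  unfolding graft_def by (auto dest: in_set_takeD in_set_dropD)

lemma length_concat_le: "\<forall>w \<in> set ws. length w \<le> t \<Longrightarrow> length (concat ws) \<le> length ws * t"
  by (induction ws) auto

lemma card_lists_agreeing_le:
  assumes "finite A" "\<forall>w \<in> C. set w \<subseteq> A \<and> length w = m" "D \<subseteq> {..<m}"
    and agree: "\<forall>w \<in> C. \<forall>w' \<in> C. \<forall>k \<in> D. w ! k = w' ! k"
  shows "card C \<le> card A ^ (m - card D)"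
proof -
  define E where "E = {..<m} - D"
  define restrict where "restrict w = map (nth w) (sorted_list_of_set E)" for w :: "'a list"
  have "inj_on restrict C"
  proof (rule inj_onI)
    fix w w' assume "w \<in> C" "w' \<in> C" "restrict w = restrict w'"
    then have "\<forall>k \<in> E. w ! k = w' ! k" by (simp add: restrict_def E_def)
    moreover have "\<forall>k \<in> D. w ! k = w' ! k" using \<open>w \<in> C\<close> \<open>w' \<in> C\<close> agree by blast
    ultimately show "w = w'"
      using \<open>w \<in> C\<close> \<open>w' \<in> C\<close> assms(2) by (intro nth_equalityI) (auto simp: E_def)
  qed
  moreover have "restrict ` C \<subseteq> {u. set u \<subseteq> A \<and> length u = card E}"
    using assms(2) by (fastforce simp: restrict_def E_def)
  ultimately have "card C \<le> card {u. set u \<subseteq> A \<and> length u = card E}"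
    using assms(1) by (intro card_inj_on_le finite_lists_length_eq)
  also have "\<dots> = card A ^ (m - card D)"
    using assms(3) by (simp add: card_lists_length_eq[OF assms(1)] E_def card_Diff_subset finite_subset)
  finally show ?thesis .
qed

lemma inj_on_mod_window:
  fixes m :: nat
  assumes "l \<le> m"
  shows "inj_on (\<lambda>p. p mod m) {i..<i + l}"
proof (rule inj_onI)
  have close_residues: "p = q" if le: "p \<le> q" and lt: "q < p + m" and eq: "p mod m = q mod m" for p q
  proof -
    obtain s where "q = p + m * s" using mod_eq_nat1E[OF eq[symmetric] le] .
    with lt show ?thesis by (cases s) auto
  qed
  fix p q assume "p \<in> {i..<i + l}" "q \<in> {i..<i + l}" "p mod m = q mod m"
  then show "p = q" using close_residues[of p q] close_residues[of q p] assms by fastforce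
qed

lemma card_le_card_times_fibre:
  assumes "finite T" "f ` W \<subseteq> T" "\<And>y. y \<in> T \<Longrightarrow> card {w \<in> W. f w = y} \<le> b"
  shows "card W \<le> card T * b"
proof -
  have "W = (\<Union>y \<in> T. {w \<in> W. f w = y})" using assms(2) by auto
  then have "card W \<le> (\<Sum>y \<in> T. card {w \<in> W. f w = y})"
    by (metis card_UN_le[OF assms(1)])
  also have "\<dots> \<le> card T * b" using sum_bounded_above[of T _ b] assms(3) by simp
  finally show ?thesis .
qed

lemma two_pow_gt_cube: "1 \<le> c \<Longrightarrow> c * (8 * c)^2 < (2::nat) ^ (8 * c)"
proof (induction c rule: nat_induct_at_least)
  case (Suc c)
  have "Suc c * (8 * Suc c)^2 = 64 * (Suc c)^3" by (simp add: power2_eq_square power3_eq_cube algebra_simps)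
  also have "\<dots> \<le> 64 * (2 * c)^3" using Suc(1) by (intro mult_le_mono2 power_mono) auto
  also have "\<dots> = 8 * (c * (8 * c)^2)" by (simp add: power2_eq_square power3_eq_cube)
  also have "\<dots> < 8 * 2 ^ (8 * c)" using Suc(2) by simp
  also have "\<dots> \<le> 2 ^ (8 * Suc c)" by (simp add: power_add)
  finally show ?case .
qed simp

section \<open>Derivation trees\<close>

definition yields_symbol :: "(nat \<Rightarrow> 't list \<Rightarrow> bool) \<Rightarrow> nat + 't \<Rightarrow> 't list \<Rightarrow> bool" where
  "yields_symbol G s w \<longleftrightarrow> (case s of Inl B \<Rightarrow> G B w | Inr a \<Rightarrow> w = [a])"

lemma yields_symbol_mono [mono]:
  "(\<And>B w. G B w \<longrightarrow> G' B w) \<Longrightarrow> yields_symbol G s w \<longrightarrow> yields_symbol G' s w"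
  by (auto simp: yields_symbol_def split: sum.splits)

inductive generates :: "'t cfg_prods \<Rightarrow> nat \<Rightarrow> 't list \<Rightarrow> bool" for P where
  "(A, r) \<in> P \<Longrightarrow> list_all2 (yields_symbol (generates P)) r ws \<Longrightarrow> generates P A (concat ws)"

lemma derives1_in_context: "derives1 P u u' \<Longrightarrow> derives1 P (x @ u @ y) (x @ u' @ y)"
  unfolding derives1_def by (metis append.assoc)

lemma derives_in_context: "derives P u u' \<Longrightarrow> derives P (x @ u @ y) (x @ u' @ y)"
  unfolding derives_def
  by (induction rule: rtranclp_induct) (auto intro: rtranclp.rtrancl_into_rtrancl derives1_in_context)

lemma derives_append:
  assumes "derives P u u'" "derives P v v'"
  shows "derives P (u @ v) (u' @ v')"
proof -
  have "derives P (u @ v) (u' @ v)" using derives_in_context[OF assms(1), of "[]" v] by simp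
  moreover have "derives P (u' @ v) (u' @ v')" using derives_in_context[OF assms(2), of u' "[]"] by simp
  ultimately show ?thesis unfolding derives_def by (rule rtranclp_trans)
qed

lemma derives_concat:
  "list_all2 (\<lambda>s w. derives P [s] (map Inr w)) r ws \<Longrightarrow> derives P r (map Inr (concat ws))"
proof (induction rule: list_all2_induct)
  case (Cons s r w ws)
  then show ?case using derives_append[OF Cons(1) Cons(3)] by simp
qed (simp add: derives_def)

lemma generates_derives: "generates P A w \<Longrightarrow> derives P [Inl A] (map Inr w)"
proof (induction rule: generates.induct)
  case (1 A r ws)
  from 1(2) have "list_all2 (\<lambda>s w. derives P [s] (map Inr w)) r ws"
    by (rule list_all2_mono) (auto simp: yields_symbol_def derives_def split: sum.splits)
  then have "derives P r (map Inr (concat ws))" by (rule derives_concat)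
  moreover have "derives1 P [Inl A] r"
    unfolding derives1_def using 1(1) by (metis append.left_neutral append.right_neutral)
  ultimately show ?case unfolding derives_def by (meson converse_rtranclp_into_rtranclp)
qed

lemma derives_terminals_generates:
  "derives P u (map Inr z) \<Longrightarrow> \<exists>ws. list_all2 (yields_symbol (generates P)) u ws \<and> z = concat ws"
  unfolding derives_def
proof (induction rule: converse_rtranclp_induct)
  case base
  show ?case
    by (rule exI[of _ "map (\<lambda>a. [a]) z"])
       (simp add: yields_symbol_def list_all2_map1 list_all2_map2 list_all2_refl)
next
  case (step u u')
  then obtain ws where ws: "list_all2 (yields_symbol (generates P)) u' ws" "z = concat ws"
    by blast
  from step(1) obtain \<alpha> \<beta> A r where u: "u = \<alpha> @ [Inl A] @ \<beta>" "(A, r) \<in> P" "u' = \<alpha> @ r @ \<beta>"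
    unfolding derives1_def by blast
  let ?Y = "list_all2 (yields_symbol (generates P))"
  from ws(1) u(3) obtain ws\<^sub>\<alpha> ws' where "ws = ws\<^sub>\<alpha> @ ws'" "?Y \<alpha> ws\<^sub>\<alpha>" "?Y (r @ \<beta>) ws'"
    by (auto simp: list_all2_append1)
  moreover from this(3) obtain ws\<^sub>r ws\<^sub>\<beta> where "ws' = ws\<^sub>r @ ws\<^sub>\<beta>" "?Y r ws\<^sub>r" "?Y \<beta> ws\<^sub>\<beta>"
    by (auto simp: list_all2_append1)
  moreover have "yields_symbol (generates P) (Inl A) (concat ws\<^sub>r)"
    using u(2) \<open>?Y r ws\<^sub>r\<close> by (simp add: yields_symbol_def generates.intros)
  ultimately have "?Y u (ws\<^sub>\<alpha> @ [concat ws\<^sub>r] @ ws\<^sub>\<beta>)" "z = concat (ws\<^sub>\<alpha> @ [concat ws\<^sub>r] @ ws\<^sub>\<beta>)"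
    using ws(2) u(1) by (simp_all add: list_all2_appendI)
  then show ?case by blast
qed

lemma lang_iff_generates: "w \<in> lang P S \<longleftrightarrow> generates P S w"
proof
  assume "w \<in> lang P S"
  then obtain ws where "list_all2 (yields_symbol (generates P)) [Inl S] ws" "w = concat ws"
    using derives_terminals_generates unfolding lang_def by blast
  then show "generates P S w" by (auto simp: list_all2_Cons1 yields_symbol_def)
qed (simp add: lang_def generates_derives)

text \<open>Descend into a child whose yield still has length at least $t$; at a node all of whose
  children yield fewer than $t$ letters, the yield has length at most $K t$.\<close>

lemma generates_long_subword:
  assumes "generates P X z" "t \<le> length z"
    and "2 \<le> t" "\<forall>(A, r) \<in> P. length r \<le> K"
  shows "\<exists>A u v x. z = u @ v @ x \<and> generates P A v \<and> t \<le> length v \<and> length v \<le> K * t \<and>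
           (\<forall>v'. generates P A v' \<longrightarrow> generates P X (u @ v' @ x))"
  using assms(1,2)
proof (induction rule: generates.induct)
  case (1 X r ws)
  have children: "list_all2 (yields_symbol (generates P)) r ws"
    using 1(2) by (rule list_all2_mono) (auto simp: yields_symbol_def split: sum.splits)
  have "length r = length ws" using children by (rule list_all2_lengthD)
  show ?case
  proof (cases "\<exists>j < length ws. t \<le> length (ws ! j)")
    case True
    then obtain j where j: "j < length ws" "t \<le> length (ws ! j)" by blast
    note child = list_all2_nthD[OF 1(2), of j]
    obtain B where B: "r ! j = Inl B"
    proof (cases "r ! j")
      case (Inr a)
      then have "ws ! j = [a]" using child j \<open>length r = length ws\<close> by (simp add: yields_symbol_def)
      with j assms(3) show ?thesis by simp
    qed
    then obtain A u v x where uvx: "ws ! j = u @ v @ x" "generates P A v" "t \<le> length v" "length v \<le> K * t"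
      "\<forall>v'. generates P A v' \<longrightarrow> generates P B (u @ v' @ x)"
      using child j \<open>length r = length ws\<close> by (auto simp: yields_symbol_def)
    define pre where "pre = concat (take j ws)"
    define suf where "suf = concat (drop (Suc j) ws)"
    have replace: "concat (ws[j := y]) = pre @ y @ suf" for y
      using j(1) by (simp add: pre_def suf_def upd_conv_take_nth_drop)
    have "generates P X (pre @ (u @ v' @ x) @ suf)" if "generates P A v'" for v'
    proof -
      have "list_all2 (yields_symbol (generates P)) (r[j := Inl B]) (ws[j := u @ v' @ x])"
        using children uvx(5) that by (intro list_all2_update_cong) (simp_all add: yields_symbol_def)
      then show ?thesis using 1(1) B replace by (metis generates.intros list_update_id)
    qed
    moreover have "concat ws = pre @ ws ! j @ suf"
      using replace[of "ws ! j"] by simp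
    ultimately show ?thesis using uvx
      by (intro exI[of _ A] exI[of _ "pre @ u"] exI[of _ v] exI[of _ "x @ suf"]) simp
  next
    case False
    have "\<forall>w \<in> set ws. length w \<le> t"
    proof
      fix w assume "w \<in> set ws"
      then obtain j where "j < length ws" "w = ws ! j" by (auto simp: in_set_conv_nth)
      with False show "length w \<le> t" by (meson nat_le_linear)
    qed
    then have "length (concat ws) \<le> length ws * t" by (rule length_concat_le)
    also have "\<dots> \<le> K * t"
      using 1(1) assms(4) \<open>length r = length ws\<close> by (intro mult_le_mono1) fastforce
    finally show ?thesis
      using 1(1,3) children generates.intros[of X r P ws]
      by (intro exI[of _ X] exI[of _ "[]"] exI[of _ "concat ws"] exI[of _ "[]"]) simp
  qed
qed

lemma generates_lhs: "generates P A w \<Longrightarrow> A \<in> fst ` P"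
  by (erule generates.cases) force

definition replaceable_window :: "'t cfg_prods \<Rightarrow> nat \<Rightarrow> nat \<Rightarrow> nat \<Rightarrow> nat \<Rightarrow> 't list \<Rightarrow> bool" where
  "replaceable_window P S A i l z \<longleftrightarrow> i + l \<le> length z \<and> generates P A (take l (drop i z)) \<and>
     (\<forall>v. generates P A v \<longrightarrow> generates P S (take i z @ v @ drop (i + l) z))"

corollary generates_replaceable_window:
  assumes "generates P S z" "t \<le> length z" "2 \<le> t" "\<forall>(A, r) \<in> P. length r \<le> K"
  shows "\<exists>A i l. t \<le> l \<and> l \<le> K * t \<and> replaceable_window P S A i l z"
proof -
  obtain A u v x where "z = u @ v @ x" "generates P A v" "t \<le> length v" "length v \<le> K * t"
    "\<forall>v'. generates P A v' \<longrightarrow> generates P S (u @ v' @ x)"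
    using generates_long_subword[OF assms] by blast
  then show ?thesis unfolding replaceable_window_def
    by (intro exI[of _ A] exI[of _ "length u"] exI[of _ "length v"]) simp
qed

lemma generates_graft:
  "replaceable_window P S A i l z \<Longrightarrow> replaceable_window P S A i l z' \<Longrightarrow> generates P S (graft i l z z')"
  by (simp add: replaceable_window_def graft_def)

section \<open>The language of non-squares\<close>

definition bits :: "nat set" where
  "bits = {0, 1}"

lemma finite_bits: "finite bits" and card_bits: "card bits = 2"
  by (simp_all add: bits_def)

definition non_squares :: "nat list set" where
  "non_squares = {s \<in> lists bits. \<exists>m k. length s = 2 * m \<and> k < m \<and> s ! k \<noteq> s ! (k + m)}"

definition centred :: "nat \<Rightarrow> nat list \<Rightarrow> bool" where
  "centred b w \<longleftrightarrow> (\<exists>p q. w = p @ b # q \<and> length p = length q \<and> set p \<subseteq> bits \<and> set q \<subseteq> bits)"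

text \<open>Nonterminal \<open>Suc b\<close> derives the odd-length words with middle letter \<open>b\<close>.\<close>

definition non_square_grammar :: "nat cfg_prods" where
  "non_square_grammar =
     {(0, [Inl (Suc a), Inl (Suc b)]) | a b. a \<in> bits \<and> b \<in> bits \<and> a \<noteq> b} \<union>
     {(Suc b, [Inr b]) | b. b \<in> bits} \<union>
     {(Suc b, [Inr c, Inl (Suc b), Inr d]) | b c d. b \<in> bits \<and> c \<in> bits \<and> d \<in> bits}"

lemma finite_non_square_grammar: "finite non_square_grammar"
proof -
  have "{(0, [Inl (Suc a), Inl (Suc b)]) | a b. a \<in> bits \<and> b \<in> bits \<and> a \<noteq> b}
        \<subseteq> (\<lambda>(a, b). (0, [Inl (Suc a), Inl (Suc b)])) ` (bits \<times> bits)"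
    "{(Suc b, [Inr c, Inl (Suc b), Inr d]) | b c d. b \<in> bits \<and> c \<in> bits \<and> d \<in> bits}
        = (\<lambda>(b, c, d). (Suc b, [Inr c, Inl (Suc b), Inr d])) ` (bits \<times> bits \<times> bits)"
    by force+
  then show ?thesis by (auto simp: non_square_grammar_def bits_def intro: finite_subset)
qed

lemma centred_in_lists: "centred b w \<Longrightarrow> b \<in> bits \<Longrightarrow> w \<in> lists bits"
  unfolding centred_def by auto

lemma centred_nth: "length s = 2 * j + 1 \<Longrightarrow> s \<in> lists bits \<Longrightarrow> centred (s ! j) s"
  unfolding centred_def
  by (intro exI[of _ "take j s"] exI[of _ "drop (Suc j) s"])
     (auto simp: id_take_nth_drop dest: in_set_takeD in_set_dropD)

lemma centred_extend:
  assumes "centred b w" "c \<in> bits" "d \<in> bits"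
  shows "centred b (c # w @ [d])"
proof -
  obtain p q where "w = p @ b # q" "length p = length q" "set p \<subseteq> bits" "set q \<subseteq> bits"
    using assms(1) unfolding centred_def by blast
  with assms(2,3) show ?thesis
    unfolding centred_def by (intro exI[of _ "c # p"] exI[of _ "q @ [d]"]) simp
qed

lemma generates_Suc_iff_centred:
  assumes "b \<in> bits"
  shows "generates non_square_grammar (Suc b) w \<longleftrightarrow> centred b w"
proof
  have "centred b w" if "generates non_square_grammar A w" "A = Suc b" "b \<in> bits" for A b w
    using that
  proof (induction arbitrary: b rule: generates.induct)
    case (1 A r ws)
    then consider "r = [Inr b]"
      | c d where "c \<in> bits" "d \<in> bits" "r = [Inr c, Inl (Suc b), Inr d]"
      by (auto simp: non_square_grammar_def)
    then show ?case
    proof cases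
      case 1
      with \<open>list_all2 _ r ws\<close> have "ws = [[b]]" by (auto simp: yields_symbol_def list_all2_Cons1)
      then show ?thesis unfolding centred_def by (intro exI[of _ "[]"]) simp
    next
      case (2 c d)
      with \<open>list_all2 _ r ws\<close> \<open>b \<in> bits\<close> obtain w' where "ws = [[c], w', [d]]" "centred b w'"
        by (auto simp: yields_symbol_def list_all2_Cons1)
      with 2 show ?thesis by (simp add: centred_extend)
    qed
  qed
  then show "centred b w" if "generates non_square_grammar (Suc b) w"
    using that assms by blast
  show "generates non_square_grammar (Suc b) w" if centred: "centred b w"
  proof -
    obtain p q where "w = p @ b # q" "length p = length q" "set p \<subseteq> bits" "set q \<subseteq> bits"
      using centred unfolding centred_def by blast
    then show ?thesis
    proof (induction p arbitrary: q w)
      case Nil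
      with assms have "(Suc b, [Inr b]) \<in> non_square_grammar" by (simp add: non_square_grammar_def)
      with Nil show ?case
        using generates.intros[of "Suc b" "[Inr b]" _ "[[b]]"] by (simp add: yields_symbol_def)
    next
      case (Cons c p)
      then obtain q' d where q: "q = q' @ [d]" by (cases q rule: rev_cases) auto
      with Cons have "generates non_square_grammar (Suc b) (p @ b # q')" by (intro Cons.IH) auto
      moreover have "(Suc b, [Inr c, Inl (Suc b), Inr d]) \<in> non_square_grammar"
        using assms Cons.prems q by (simp add: non_square_grammar_def)
      ultimately show ?case
        using Cons.prems(1) q generates.intros[of "Suc b" _ _ "[[c], p @ b # q', [d]]"]
        by (simp add: yields_symbol_def)
    qed
  qed
qed

lemma generates_zero_iff:
  "generates non_square_grammar 0 s \<longleftrightarrow>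
     (\<exists>x y a b. s = x @ y \<and> a \<in> bits \<and> b \<in> bits \<and> a \<noteq> b \<and> centred a x \<and> centred b y)"
proof
  assume "generates non_square_grammar 0 s"
  then obtain r ws where "(0, r) \<in> non_square_grammar"
    "list_all2 (yields_symbol (generates non_square_grammar)) r ws" "s = concat ws"
    by (cases rule: generates.cases) auto
  moreover from this(1) obtain a b where "a \<in> bits" "b \<in> bits" "a \<noteq> b" "r = [Inl (Suc a), Inl (Suc b)]"
    by (auto simp: non_square_grammar_def)
  ultimately show "\<exists>x y a b. s = x @ y \<and> a \<in> bits \<and> b \<in> bits \<and> a \<noteq> b \<and> centred a x \<and> centred b y"
    by (auto simp: yields_symbol_def list_all2_Cons1 generates_Suc_iff_centred) blast
next
  assume "\<exists>x y a b. s = x @ y \<and> a \<in> bits \<and> b \<in> bits \<and> a \<noteq> b \<and> centred a x \<and> centred b y"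
  then obtain x y a b where "s = x @ y" "a \<in> bits" "b \<in> bits" "a \<noteq> b" "centred a x" "centred b y"
    by blast
  then have "generates non_square_grammar (Suc a) x" "generates non_square_grammar (Suc b) y"
    by (simp_all add: generates_Suc_iff_centred)
  moreover have "(0, [Inl (Suc a), Inl (Suc b)]) \<in> non_square_grammar"
    using \<open>a \<in> bits\<close> \<open>b \<in> bits\<close> \<open>a \<noteq> b\<close> by (simp add: non_square_grammar_def)
  ultimately show "generates non_square_grammar 0 s"
    using \<open>s = x @ y\<close> generates.intros[of 0 _ _ "[x, y]"] by (simp add: yields_symbol_def)
qed

lemma centred_append_in_non_squares:
  assumes "centred a x" "centred b y" "a \<in> bits" "b \<in> bits" "a \<noteq> b"
  shows "x @ y \<in> non_squares"
proof -
  obtain p q p' q' where x: "x = p @ a # q" "length p = length q"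
    and y: "y = p' @ b # q'" "length p' = length q'"
    using assms(1,2) unfolding centred_def by blast
  define m where "m = length p + length p' + 1"
  have "length (x @ y) = 2 * m" "(x @ y) ! length p = a" "(x @ y) ! (length p + m) = b"
    using x y by (simp_all add: m_def nth_append)
  moreover have "x @ y \<in> lists bits" using assms(1-4) by (simp add: centred_in_lists)
  ultimately show ?thesis
    using assms(5) unfolding non_squares_def by (intro CollectI conjI exI[of _ m] exI[of _ "length p"]) (simp_all add: m_def)
qed

lemma non_squares_split:
  assumes "s \<in> non_squares"
  shows "\<exists>x y a b. s = x @ y \<and> a \<in> bits \<and> b \<in> bits \<and> a \<noteq> b \<and> centred a x \<and> centred b y"
proof -
  obtain m k where s: "s \<in> lists bits" "length s = 2 * m" "k < m" "s ! k \<noteq> s ! (k + m)"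
    using assms unfolding non_squares_def by blast
  define x where "x = take (2 * k + 1) s"
  define y where "y = drop (2 * k + 1) s"
  have "x \<in> lists bits" "y \<in> lists bits"
    using s(1) by (auto simp: x_def y_def dest: in_set_takeD in_set_dropD)
  moreover have "length x = 2 * k + 1" "length y = 2 * (m - k - 1) + 1"
    using s(2,3) by (simp_all add: x_def y_def)
  ultimately have "centred (x ! k) x" "centred (y ! (m - k - 1)) y"
    by (simp_all add: centred_nth)
  moreover have "x ! k = s ! k" "y ! (m - k - 1) = s ! (k + m)"
    using s(2,3) by (simp_all add: x_def y_def algebra_simps)
  moreover have "s ! k \<in> bits" "s ! (k + m) \<in> bits"
    using s(1-3) by (simp_all add: in_lists_conv_set)
  ultimately show ?thesis
    using s(4) by (intro exI[of _ x] exI[of _ y]) (auto simp: x_def y_def)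
qed

lemma lang_non_square_grammar: "lang non_square_grammar 0 = non_squares"
  using centred_append_in_non_squares non_squares_split
  by (auto simp: lang_iff_generates generates_zero_iff)

lemma not_in_non_squares_iff:
  "s \<in> lists bits \<Longrightarrow> length s = 2 * m \<Longrightarrow> s \<notin> non_squares \<longleftrightarrow> (\<forall>k < m. s ! k = s ! (k + m))"
  by (auto simp: non_squares_def)

lemma append_self_not_in_non_squares: "w @ w \<notin> non_squares"
proof
  assume "w @ w \<in> non_squares"
  then obtain m k where "length (w @ w) = 2 * m" "k < m" "(w @ w) ! k \<noteq> (w @ w) ! (k + m)"
    unfolding non_squares_def by blast
  moreover from this(1) have "m = length w" by simp
  ultimately show False by (simp add: nth_append)
qed

section \<open>No advice grammar accepts the squares\<close>

text \<open>As $l \le m$, exactly one of $k$ and $k + m$ lies in the window, so the square condition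
  at $k$ compares a letter of $w$ with the same letter of $w'$.\<close>

lemma graft_squares_agree:
  assumes "length w = m" "length w' = m" "l \<le> m" "i + l \<le> 2 * m"
    and square: "\<forall>k < m. graft i l (w @ w) (w' @ w') ! k = graft i l (w @ w) (w' @ w') ! (k + m)"
    and "k \<in> (\<lambda>p. p mod m) ` {i..<i + l}"
  shows "w ! k = w' ! k"
proof -
  let ?r = "graft i l (w @ w) (w' @ w')"
  have nth_r: "?r ! q = (if i \<le> q \<and> q < i + l then (w' @ w') ! q else (w @ w) ! q)" if "q < 2 * m" for q
    using nth_graft[of "w' @ w'" "w @ w" i l q] that assms(1,2,4) by simp
  have ww: "(v @ v) ! k = v ! k" "(v @ v) ! (k + m) = v ! k" if "length v = m" "k < m" for v :: "'a list"
    using that by (simp_all add: nth_append)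
  obtain p where p: "i \<le> p" "p < i + l" "k = p mod m" using assms(6) by auto
  show ?thesis
  proof (cases "p < m")
    case True
    then have "k = p" "k < m" "i \<le> k" "k < i + l" "\<not> k + m < i + l" using p assms(3) by simp_all
    then show ?thesis using square nth_r[of k] nth_r[of "k + m"] ww assms(1,2) by simp
  next
    case False
    then have "k = p - m" using p assms(3,4) by (simp add: le_mod_geq)
    then have "k < m" "\<not> i \<le> k" "i \<le> k + m" "k + m < i + l" using False p assms(3,4) by simp_all
    then show ?thesis using square nth_r[of k] nth_r[of "k + m"] ww assms(1,2) by simp
  qed
qed

lemma card_replaceable_window_le:
  assumes squares: "\<And>s. s \<in> lists bits \<Longrightarrow> length s = 2 * m \<Longrightarrow> generates P S (zip s H) \<Longrightarrow> s \<notin> non_squares"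
    and "length H = 2 * m" "l \<le> m"
  shows "card {w. set w \<subseteq> bits \<and> length w = m \<and> replaceable_window P S A i l (zip (w @ w) H)} \<le> 2 ^ (m - l)"
    (is "card ?C \<le> _")
proof -
  define D where "D = (\<lambda>p. p mod m) ` {i..<i + l}"
  have card_D: "card D = l"
    using card_image[OF inj_on_mod_window[OF assms(3)]] by (simp add: D_def)
  have D_sub: "D \<subseteq> {..<m}"
  proof
    fix k assume "k \<in> D"
    then obtain p where "p \<in> {i..<i + l}" "k = p mod m" by (auto simp: D_def)
    with assms(3) show "k \<in> {..<m}" by simp
  qed
  have agree: "\<forall>w \<in> ?C. \<forall>w' \<in> ?C. \<forall>k \<in> D. w ! k = w' ! k"
  proof (intro ballI)
    fix w w' k assume "w \<in> ?C" "w' \<in> ?C" "k \<in> D"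
    define r where "r = graft i l (w @ w) (w' @ w')"
    have lengths: "length w = m" "length w' = m" "i + l \<le> 2 * m"
      using \<open>w \<in> ?C\<close> \<open>w' \<in> ?C\<close> assms(2) by (auto simp: replaceable_window_def)
    have "generates P S (graft i l (zip (w @ w) H) (zip (w' @ w') H))"
      using \<open>w \<in> ?C\<close> \<open>w' \<in> ?C\<close> generates_graft by blast
    then have "generates P S (zip r H)"
      using lengths by (simp add: graft_zip r_def)
    moreover have "r \<in> lists bits" "length r = 2 * m"
      using \<open>w \<in> ?C\<close> \<open>w' \<in> ?C\<close> lengths set_graft[of i l "w @ w" "w' @ w'"]
      by (auto simp: r_def length_graft)
    ultimately have "\<forall>k < m. r ! k = r ! (k + m)"
      using squares not_in_non_squares_iff by blast
    with lengths assms(3) \<open>k \<in> D\<close> show "w ! k = w' ! k"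
      unfolding r_def D_def by (intro graft_squares_agree) auto
  qed
  have "card ?C \<le> card bits ^ (m - card D)"
    by (rule card_lists_agreeing_le[OF finite_bits _ D_sub agree]) blast
  then show ?thesis by (simp only: card_bits card_D)
qed

lemma square_advice_bound:
  assumes "finite P" "\<forall>(A, r) \<in> P. length r \<le> K" "2 \<le> t" "t \<le> m" "K * t \<le> m" "length H = 2 * m"
    and accepts: "\<And>s. s \<in> lists bits \<Longrightarrow> length s = 2 * m \<Longrightarrow> generates P S (zip s H) \<longleftrightarrow> s \<notin> non_squares"
  shows "2 ^ t \<le> (2 * m + 1)^2 * card (fst ` P)"
proof -
  define W where "W = {w. set w \<subseteq> bits \<and> length w = m}"
  define T where "T = {..2 * m} \<times> {t..m} \<times> fst ` P"
  have "\<exists>y \<in> T. case y of (i, l, A) \<Rightarrow> replaceable_window P S A i l (zip (w @ w) H)" if "w \<in> W" for w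
  proof -
    have "generates P S (zip (w @ w) H)"
      using that accepts[of "w @ w"] append_self_not_in_non_squares by (simp add: W_def lists_eq_set)
    moreover have "t \<le> length (zip (w @ w) H)" using that assms(4,6) by (simp add: W_def)
    ultimately obtain A i l where "t \<le> l" "l \<le> K * t" "replaceable_window P S A i l (zip (w @ w) H)"
      using generates_replaceable_window assms(2,3) by blast
    moreover from this(3) have "i + l \<le> 2 * m" "A \<in> fst ` P"
      using that assms(6) by (auto simp: replaceable_window_def W_def dest: generates_lhs)
    ultimately show ?thesis using assms(5) by (intro bexI[of _ "(i, l, A)"]) (auto simp: T_def)
  qed
  then obtain f where f: "\<And>w. w \<in> W \<Longrightarrow> f w \<in> T"
    "\<And>w. w \<in> W \<Longrightarrow> case f w of (i, l, A) \<Rightarrow> replaceable_window P S A i l (zip (w @ w) H)"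
    by metis
  have fibre: "card {w \<in> W. f w = y} \<le> 2 ^ (m - t)" if "y \<in> T" for y
  proof -
    obtain i l A where y: "y = (i, l, A)" "t \<le> l" "l \<le> m" using \<open>y \<in> T\<close> by (auto simp: T_def)
    let ?C = "{w. set w \<subseteq> bits \<and> length w = m \<and> replaceable_window P S A i l (zip (w @ w) H)}"
    have "{w \<in> W. f w = y} \<subseteq> ?C"
    proof
      fix w assume "w \<in> {w \<in> W. f w = y}"
      with f(2)[of w] show "w \<in> ?C" by (auto simp: W_def y(1))
    qed
    moreover have "finite ?C"
      by (rule finite_subset[OF _ finite_lists_length_eq[OF finite_bits, of m]]) blast
    ultimately have "card {w \<in> W. f w = y} \<le> card ?C" by (rule card_mono[rotated])
    also have "\<dots> \<le> 2 ^ (m - l)"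
      using accepts by (intro card_replaceable_window_le[OF _ assms(6) y(3)]) blast
    also have "\<dots> \<le> 2 ^ (m - t)" using y(2) by simp
    finally show ?thesis .
  qed
  moreover have "finite T" using assms(1) by (simp add: T_def)
  moreover have "f ` W \<subseteq> T" using f(1) by blast
  ultimately have W_le: "card W \<le> card T * 2 ^ (m - t)" by (intro card_le_card_times_fibre)
  have T_le: "card T \<le> (2 * m + 1)^2 * card (fst ` P)"
  proof -
    have "card T = (2 * m + 1) * ((Suc m - t) * card (fst ` P))" by (simp add: T_def card_cartesian_product)
    also have "\<dots> \<le> (2 * m + 1) * ((2 * m + 1) * card (fst ` P))" by (intro mult_le_mono) auto
    finally show ?thesis by (simp only: power2_eq_square mult.assoc)
  qed
  have "2 ^ t * 2 ^ (m - t) = card W"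
    using assms(4) by (simp add: W_def card_lists_length_eq finite_bits card_bits flip: power_add)
  also have "\<dots> \<le> (2 * m + 1)^2 * card (fst ` P) * 2 ^ (m - t)"
    using W_le T_le by (meson le_trans mult_le_mono1)
  finally show ?thesis by simp
qed

lemma coCFL_complement_non_squares: "coCFL bits (lists bits - non_squares)"
proof -
  have "lists bits - (lists bits - non_squares) = lang non_square_grammar 0"
    by (auto simp: lang_non_square_grammar non_squares_def)
  then show ?thesis
    using finite_non_square_grammar unfolding coCFL_def CFL_def by auto
qed

lemma not_CFL_advice_complement_non_squares: "\<not> CFL_advice bits (lists bits - non_squares)"
proof
  assume "CFL_advice bits (lists bits - non_squares)"
  then obtain Gamma :: "nat set" and h :: "nat \<Rightarrow> nat list" and L' :: "(nat \<times> nat) list set"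
    where h: "\<forall>n. length (h n) = n \<and> set (h n) \<subseteq> Gamma" and "CFL (bits \<times> Gamma) L'"
    and advice: "\<forall>x \<in> lists bits. x \<in> lists bits - non_squares \<longleftrightarrow> zip x (h (length x)) \<in> L'"
    unfolding CFL_advice_def by (elim conjE exE) (rule that)
  from \<open>CFL _ L'\<close> obtain P S where "finite P" and L': "L' = lang P S" unfolding CFL_def by blast
  define K where "K = Suc (Max ((length \<circ> snd) ` P))"
  have K: "\<forall>(A, r) \<in> P. length r \<le> K"
  proof clarify
    fix A r assume "(A, r) \<in> P"
    then have "length r \<in> (length \<circ> snd) ` P" by (rule rev_image_eqI) simp
    with \<open>finite P\<close> show "length r \<le> K" unfolding K_def by (simp add: le_SucI)
  qed
  define c where "c = (2 * K + 1)^2 * (card (fst ` P) + 1)"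
  define t where "t = 8 * c"
  define m where "m = K * t"
  have "1 \<le> c" by (simp add: c_def Suc_le_eq)
  have "2 \<le> t" "t \<le> m" "K * t \<le> m" using \<open>1 \<le> c\<close> by (simp_all add: t_def m_def K_def)
  have accepts: "generates P S (zip s (h (2 * m))) \<longleftrightarrow> s \<notin> non_squares"
    if "s \<in> lists bits" "length s = 2 * m" for s
    using that advice by (auto simp: L' lang_iff_generates)
  have "2 ^ t \<le> (2 * m + 1)^2 * card (fst ` P)"
    using square_advice_bound[OF \<open>finite P\<close> K \<open>2 \<le> t\<close> \<open>t \<le> m\<close> \<open>K * t \<le> m\<close> conjunct1[OF h[rule_format]] accepts] .
  also have "\<dots> \<le> ((2 * K + 1) * t)^2 * card (fst ` P)"
    using \<open>2 \<le> t\<close> by (intro mult_le_mono1 power_mono) (simp_all add: m_def algebra_simps)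
  also have "\<dots> = (2 * K + 1)^2 * card (fst ` P) * t^2"
    by (simp only: power_mult_distrib mult_ac)
  also have "\<dots> \<le> c * t^2"
    unfolding c_def by (intro mult_le_mono1 mult_le_mono2) simp
  also have "\<dots> < 2 ^ t"
    unfolding t_def by (rule two_pow_gt_cube[OF \<open>1 \<le> c\<close>])
  finally show False by simp
qed

theorem proposition4p4:
  shows "\<exists>(Sig :: nat set) (L :: nat list set).
           finite Sig \<and> coCFL Sig L \<and> \<not> CFL_advice Sig L"
  by (intro exI[of _ bits] exI[of _ "lists bits - non_squares"] conjI
      finite_bits coCFL_complement_non_squares not_CFL_advice_complement_non_squares)

end
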